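(* Let $\mathcal{F}$ be a finite family of pairwise intersecting compact convex sets in the plane with the $(4,3)$ property, i.e., among any four distinct members some three have a common point. For $D\in\mathcal{F}$, let $G_D$ be the directed graph on vertex set $\mathcal{F}\setminus\{D\}$ with an arc from $A$ to $B$ if and only if $o(ABD)=1$. Then $G_D$ contains no directed cycle of length 4.
   Context: For three pairwise intersecting compact convex sets $X,Y,Z$ in the plane: $o(XYZ)=0$ if $X\cap Y\cap Z\neq\emptyset$; otherwise $o(XYZ)=o(xyz)$ for any $x\in Y\cap Z$, $y\in X\cap Z$, $z\in X\cap Y$, where for points $o(xyz)=+1$ for a counterclockwise and $-1$ for a clockwise triangle (independent of the choice). *)

theory Defs
  imports "HOL-Analysis.Analysis"
begin

definition orient_pt :: "real^2 \<Rightarrow> real^2 \<Rightarrow> real^2 \<Rightarrow> int" where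
  "orient_pt x y z =
     (let d = (y$1 - x$1) * (z$2 - x$2) - (y$2 - x$2) * (z$1 - x$1)
      in if d > 0 then 1 else if d < 0 then -1 else 0)"

text \<open>Orientation o(XYZ) of three (pairwise intersecting) sets, as in the paper:
  0 if the three have a common point, otherwise the orientation of
  x \<in> Y\<inter>Z, y \<in> X\<inter>Z, z \<in> X\<inter>Y (chosen arbitrarily; the paper notes independence
  of the choice).\<close>
definition orient_set :: "(real^2) set \<Rightarrow> (real^2) set \<Rightarrow> (real^2) set \<Rightarrow> int" where
  "orient_set X Y Z =
     (if X \<inter> Y \<inter> Z \<noteq> {} then 0
      else orient_pt (SOME x. x \<in> Y \<inter> Z) (SOME y. y \<in> X \<inter> Z) (SOME z. z \<in> X \<inter> Y))"

definition arc_G :: "(real^2) set set \<Rightarrow> (real^2) set \<Rightarrow> (real^2) set \<Rightarrow> (real^2) set \<Rightarrow> bool" where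
  "arc_G F D A B \<longleftrightarrow> A \<in> F - {D} \<and> B \<in> F - {D} \<and> orient_set A B D = 1"

end

theory Submission
  imports Defs
begin

text \<open>
  Let X, Y, Z be convex sets that meet pairwise but have no common point. Witnesses
  x \<in> Y \<inter> Z, y \<in> X \<inter> Z, z \<in> X \<inter> Y are never collinear (one of them would lie on the
  segment between the other two, hence in all three sets), and since the orientation
  determinant is affine in each point, moving one witness inside its convex intersection
  cannot change its sign. So o(XYZ) can be computed from any witnesses; this makes it
  alternating and gives exchange rules relating the orientations of triples of four sets.

  A directed 4-cycle A, B, C, E of G_D means o(ABD) = o(BCD) = o(CED) = o(EAD) = 1.
  Distinguishing whether the diagonals A, C and B, E meet inside D, the (4,3) property
  provides enough nonempty triple intersections for the exchange rules to assign two
  different values to one orientation.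
\<close>

definition orient_det :: "real^2 \<Rightarrow> real^2 \<Rightarrow> real^2 \<Rightarrow> real" where
  "orient_det x y z = (y$1 - x$1) * (z$2 - x$2) - (y$2 - x$2) * (z$1 - x$1)"

lemma orient_pt_orient_det:
  "orient_pt x y z = (if 0 < orient_det x y z then 1 else if orient_det x y z < 0 then -1 else 0)"
  unfolding orient_pt_def orient_det_def Let_def by simp

lemma orient_det_rotate: "orient_det x y z = orient_det y z x"
  unfolding orient_det_def by (simp add: algebra_simps)

lemma orient_det_swap: "orient_det y x z = - orient_det x y z"
  unfolding orient_det_def by (simp add: algebra_simps)

lemma orient_det_combination:
  "orient_det ((1 - u) *\<^sub>R x + u *\<^sub>R x') y z = (1 - u) * orient_det x y z + u * orient_det x' y z"
  unfolding orient_det_def by (simp add: algebra_simps)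

lemma parallel_if_cross_eq_0:
  fixes u v :: "real^2"
  assumes "u$1 * v$2 = u$2 * v$1" "u \<noteq> 0"
  shows "v = ((u \<bullet> v) / (u \<bullet> u)) *\<^sub>R u"
proof -
  have "u \<bullet> u \<noteq> 0" using assms(2) by simp
  moreover have "(u \<bullet> u) * v$1 = (u \<bullet> v) * u$1" "(u \<bullet> u) * v$2 = (u \<bullet> v) * u$2"
    using assms(1) by (auto simp: inner_vec_def sum_2 algebra_simps)
  ultimately show ?thesis by (simp add: vec_eq_iff forall_2 field_simps)
qed

lemma collinear_if_orient_det_eq_0:
  assumes "orient_det x y z = 0"
  shows "collinear {x, y, z}"
proof -
  have "(x - y)$1 * (z - y)$2 = (x - y)$2 * (z - y)$1"
    using assms unfolding orient_det_def by (simp add: algebra_simps)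
  then have "collinear {0, x - y, z - y}"
    unfolding collinear_lemma using parallel_if_cross_eq_0 by blast
  then show ?thesis by (simp add: collinear_3)
qed

lemma in_convex_hull_if_orient_det_same_sign:
  assumes "(0 < orient_det p s t \<and> 0 < orient_det p t q \<and> 0 < orient_det p q s) \<or>
           (orient_det p s t < 0 \<and> orient_det p t q < 0 \<and> orient_det p q s < 0)"
  shows "p \<in> convex hull {q, s, t}"
proof -
  define a b c where "a = orient_det p s t" and "b = orient_det p t q" and "c = orient_det p q s"
  \<comment> \<open>a, b, c are barycentric coordinates of p with respect to q, s, t, up to the factor S\<close>
  define S where "S = a + b + c"
  have "S \<noteq> 0" using assms unfolding S_def a_def b_def c_def by linarith
  have "S * p$i = a * q$i + b * s$i + c * t$i" for i
    using exhaust_2 [of i] by (auto simp: S_def a_def b_def c_def orient_det_def algebra_simps)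
  with \<open>S \<noteq> 0\<close> have "p = (a/S) *\<^sub>R q + (b/S) *\<^sub>R s + (c/S) *\<^sub>R t"
    by (simp add: vec_eq_iff field_simps)
  moreover have "0 \<le> a/S" "0 \<le> b/S" "0 \<le> c/S" "a/S + b/S + c/S = 1"
    using assms \<open>S \<noteq> 0\<close> unfolding S_def a_def [symmetric] b_def [symmetric] c_def [symmetric]
    by (auto simp: divide_simps)
  ultimately show ?thesis unfolding convex_hull_3 by blast
qed

lemma orient_det_witnesses_nonzero:
  assumes "convex X" "convex Y" "convex Z" "X \<inter> Y \<inter> Z = {}"
    and "x \<in> Y \<inter> Z" "y \<in> X \<inter> Z" "z \<in> X \<inter> Y"
  shows "orient_det x y z \<noteq> 0"
proof
  assume "orient_det x y z = 0"
  then have "collinear {x, y, z}" by (rule collinear_if_orient_det_eq_0)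
  then have "x \<in> closed_segment y z \<or> y \<in> closed_segment z x \<or> z \<in> closed_segment x y"
    by (simp add: collinear_between_cases between_mem_segment)
  moreover have "closed_segment y z \<subseteq> X" "closed_segment z x \<subseteq> Y" "closed_segment x y \<subseteq> Z"
    using assms closed_segment_subset [of y X z] closed_segment_subset [of z Y x]
      closed_segment_subset [of x Z y] by auto
  ultimately show False using assms by blast
qed

lemma orient_det_witnesses_sign_first:
  assumes "convex X" "convex Y" "convex Z" "X \<inter> Y \<inter> Z = {}"
    and "x \<in> Y \<inter> Z" "x' \<in> Y \<inter> Z" "y \<in> X \<inter> Z" "z \<in> X \<inter> Y"
  shows "0 < orient_det x y z \<longleftrightarrow> 0 < orient_det x' y z"
proof (rule ccontr)
  define a b where "a = orient_det x y z" and "b = orient_det x' y z"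
  assume "\<not> ?thesis"
  moreover have "a \<noteq> 0" "b \<noteq> 0"
    unfolding a_def b_def using orient_det_witnesses_nonzero [OF assms(1-4)] assms(5-8) by auto
  ultimately have opposite: "(0 < a \<and> b < 0) \<or> (a < 0 \<and> 0 < b)" unfolding a_def b_def by linarith
  define u where "u = a / (a - b)"
  have "0 \<le> u" "u \<le> 1" using opposite unfolding u_def by (auto simp: divide_simps)
  have "u * (a - b) = a" using opposite unfolding u_def by auto
  then have "(1 - u) * a + u * b = 0" by (simp add: algebra_simps)
  define w where "w = (1 - u) *\<^sub>R x + u *\<^sub>R x'"
  have "w \<in> Y \<inter> Z"
    unfolding w_def using assms(2,3,5,6) \<open>0 \<le> u\<close> \<open>u \<le> 1\<close> by (simp add: convexD)
  moreover have "orient_det w y z = 0"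
    unfolding w_def orient_det_combination a_def [symmetric] b_def [symmetric] by fact
  ultimately show False using orient_det_witnesses_nonzero [OF assms(1-4)] assms(7,8) by blast
qed

lemma orient_det_witnesses_sign:
  assumes "convex X" "convex Y" "convex Z" "X \<inter> Y \<inter> Z = {}"
    and "x \<in> Y \<inter> Z" "y \<in> X \<inter> Z" "z \<in> X \<inter> Y"
    and "x' \<in> Y \<inter> Z" "y' \<in> X \<inter> Z" "z' \<in> X \<inter> Y"
  shows "0 < orient_det x y z \<longleftrightarrow> 0 < orient_det x' y' z'"
proof -
  have YZX: "Y \<inter> Z \<inter> X = {}" and ZXY: "Z \<inter> X \<inter> Y = {}" using assms(4) by blast+
  have "0 < orient_det x y z \<longleftrightarrow> 0 < orient_det x' y z"
    by (rule orient_det_witnesses_sign_first [of X Y Z]) (use assms in auto)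
  also have "\<dots> \<longleftrightarrow> 0 < orient_det y' z x'"
    unfolding orient_det_rotate [of x' y z]
    by (rule orient_det_witnesses_sign_first [OF assms(2,3,1) YZX]) (use assms in auto)
  also have "\<dots> \<longleftrightarrow> 0 < orient_det z' x' y'"
    unfolding orient_det_rotate [of y' z x']
    by (rule orient_det_witnesses_sign_first [OF assms(3,1,2) ZXY]) (use assms in auto)
  finally show ?thesis unfolding orient_det_rotate [of z'] .
qed

lemma orient_set_eq_orient_pt:
  assumes "convex X" "convex Y" "convex Z" "X \<inter> Y \<inter> Z = {}"
    and "x \<in> Y \<inter> Z" "y \<in> X \<inter> Z" "z \<in> X \<inter> Y"
  shows "orient_set X Y Z = orient_pt x y z"
proof -
  define x' y' z' where "x' = (SOME x. x \<in> Y \<inter> Z)" and "y' = (SOME y. y \<in> X \<inter> Z)"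
    and "z' = (SOME z. z \<in> X \<inter> Y)"
  have "x' \<in> Y \<inter> Z" "y' \<in> X \<inter> Z" "z' \<in> X \<inter> Y"
    unfolding x'_def y'_def z'_def using assms by (metis someI_ex)+
  then have "orient_det x' y' z' \<noteq> 0" "0 < orient_det x y z \<longleftrightarrow> 0 < orient_det x' y' z'"
    using orient_det_witnesses_nonzero [OF assms(1-4)] orient_det_witnesses_sign [OF assms] by auto
  moreover have "orient_det x y z \<noteq> 0" by (rule orient_det_witnesses_nonzero [OF assms])
  moreover have "orient_set X Y Z = orient_pt x' y' z'"
    unfolding orient_set_def x'_def y'_def z'_def using assms(4) by simp
  ultimately show ?thesis unfolding orient_pt_orient_det by auto
qed

lemma inter_empty_if_orient_set_nonzero: "orient_set X Y Z \<noteq> 0 \<Longrightarrow> X \<inter> Y \<inter> Z = {}"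
  unfolding orient_set_def by (auto split: if_splits)

locale pairwise_meeting_convex_sets =
  fixes F :: "(real^2) set set"
  assumes convex_mem: "X \<in> F \<Longrightarrow> convex X"
    and meets: "X \<in> F \<Longrightarrow> Y \<in> F \<Longrightarrow> X \<inter> Y \<noteq> {}"
begin

lemma orient_set_witnesses:
  assumes "X \<in> F" "Y \<in> F" "Z \<in> F" "X \<inter> Y \<inter> Z = {}"
    and "x \<in> Y \<inter> Z" "y \<in> X \<inter> Z" "z \<in> X \<inter> Y"
  shows "orient_set X Y Z = orient_pt x y z" and "orient_det x y z \<noteq> 0"
proof -
  have cvx: "convex X" "convex Y" "convex Z" using assms(1-3) by (auto intro: convex_mem)
  show "orient_set X Y Z = orient_pt x y z" by (rule orient_set_eq_orient_pt [OF cvx assms(4-7)])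
  show "orient_det x y z \<noteq> 0" by (rule orient_det_witnesses_nonzero [OF cvx assms(4-7)])
qed

lemma orient_set_swap:
  assumes "X \<in> F" "Y \<in> F" "Z \<in> F"
  shows "orient_set Y X Z = - orient_set X Y Z"
proof (cases "X \<inter> Y \<inter> Z = {}")
  case True
  obtain x y z where "x \<in> Y \<inter> Z" "y \<in> X \<inter> Z" "z \<in> X \<inter> Y"
    using meets [OF assms(2,3)] meets [OF assms(1,3)] meets [OF assms(1,2)] by blast
  moreover have "Y \<inter> X \<inter> Z = {}" using True by blast
  ultimately have "orient_set X Y Z = orient_pt x y z" "orient_set Y X Z = orient_pt y x z"
    using orient_set_witnesses(1) [OF assms True] orient_set_witnesses(1) [OF assms(2,1,3)] by auto
  then show ?thesis unfolding orient_pt_orient_det orient_det_swap [of y] by auto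
qed (simp add: orient_set_def Int_ac)

lemma orient_set_rotate:
  assumes "X \<in> F" "Y \<in> F" "Z \<in> F"
  shows "orient_set X Y Z = orient_set Y Z X"
proof (cases "X \<inter> Y \<inter> Z = {}")
  case True
  obtain x y z where "x \<in> Y \<inter> Z" "y \<in> X \<inter> Z" "z \<in> X \<inter> Y"
    using meets [OF assms(2,3)] meets [OF assms(1,3)] meets [OF assms(1,2)] by blast
  moreover have "Y \<inter> Z \<inter> X = {}" using True by blast
  ultimately have "orient_set X Y Z = orient_pt x y z" "orient_set Y Z X = orient_pt y z x"
    using orient_set_witnesses(1) [OF assms True] orient_set_witnesses(1) [OF assms(2,3,1)] by auto
  then show ?thesis unfolding orient_pt_orient_det orient_det_rotate [of x] by auto
qed (simp add: orient_set_def Int_ac)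

lemma orient_set_cases:
  assumes "X \<in> F" "Y \<in> F" "Z \<in> F" "X \<inter> Y \<inter> Z = {}"
  shows "orient_set X Y Z = 1 \<or> orient_set X Y Z = -1"
proof -
  obtain x y z where "x \<in> Y \<inter> Z" "y \<in> X \<inter> Z" "z \<in> X \<inter> Y"
    using meets [OF assms(2,3)] meets [OF assms(1,3)] meets [OF assms(1,2)] by blast
  then have "orient_set X Y Z = orient_pt x y z" "orient_det x y z \<noteq> 0"
    using orient_set_witnesses [OF assms] by auto
  then show ?thesis unfolding orient_pt_orient_det by auto
qed

lemma orient_set_replace_first:
  assumes "X \<in> F" "Y \<in> F" "Z \<in> F" "W \<in> F"
    and "X \<inter> Y \<inter> Z \<noteq> {}" "X \<inter> Y \<inter> W \<noteq> {}" "X \<inter> Z \<inter> W = {}" "Y \<inter> Z \<inter> W = {}"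
  shows "orient_set X Z W = orient_set Y Z W"
proof -
  obtain r p t where "r \<in> Z \<inter> W" "p \<in> X \<inter> Y \<inter> W" "t \<in> X \<inter> Y \<inter> Z"
    using meets [OF assms(3,4)] assms(5,6) by blast
  then have "orient_set X Z W = orient_pt r p t" "orient_set Y Z W = orient_pt r p t"
    using orient_set_witnesses(1) [OF assms(1,3,4,7)] orient_set_witnesses(1) [OF assms(2,3,4,8)]
    by auto
  then show ?thesis by simp
qed

lemma orient_set_replace_last:
  assumes "X \<in> F" "Y \<in> F" "Z \<in> F" "W \<in> F"
    and "X \<inter> Z \<inter> W \<noteq> {}" "X \<inter> Y \<inter> W = {}" "Y \<inter> Z \<inter> W = {}" "X \<inter> Y \<inter> Z = {}"
    and "orient_set X Y W = orient_set Y Z W"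
  shows "orient_set X Y Z = orient_set X Y W"
proof (rule ccontr)
  assume differ: "orient_set X Y Z \<noteq> orient_set X Y W"
  obtain p q s t where pqst: "p \<in> X \<inter> Z \<inter> W" "q \<in> Y \<inter> W" "s \<in> X \<inter> Y" "t \<in> Y \<inter> Z"
    using meets [OF assms(2,4)] meets [OF assms(1,2)] meets [OF assms(2,3)] assms(5) by blast
  then have "orient_set X Y W = orient_pt q p s" "orient_det q p s \<noteq> 0"
    and "orient_set Y Z W = orient_pt p q t" "orient_det p q t \<noteq> 0"
    and "orient_set X Y Z = orient_pt t p s" "orient_det t p s \<noteq> 0"
    using orient_set_witnesses [OF assms(1,2,4,6)] orient_set_witnesses [OF assms(2,3,4,7)]
      orient_set_witnesses [OF assms(1,2,3,8)] by auto
  moreover have "orient_det t p s = orient_det p s t" "orient_det p q t = - orient_det p t q"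
    "orient_det q p s = - orient_det p q s"
    unfolding orient_det_def by (simp_all add: algebra_simps)
  \<comment> \<open>otherwise the point p of X \<inter> W would lie in the triangle q s t, which is contained in Y\<close>
  ultimately have
    "(0 < orient_det p s t \<and> 0 < orient_det p t q \<and> 0 < orient_det p q s) \<or>
     (orient_det p s t < 0 \<and> orient_det p t q < 0 \<and> orient_det p q s < 0)"
    using differ assms(9) unfolding orient_pt_orient_det by (auto split: if_splits)
  then have "p \<in> convex hull {q, s, t}" by (rule in_convex_hull_if_orient_det_same_sign)
  also have "\<dots> \<subseteq> Y" using pqst convex_mem [OF assms(2)] by (intro hull_minimal) auto
  finally show False using pqst assms(6) by blast
qed

lemma consecutive_arcs_inter_empty:
  assumes "X \<in> F" "Y \<in> F" "Z \<in> F" "D \<in> F"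
    and "orient_set X Y D \<noteq> 0" "orient_set X Y D = orient_set Y Z D" "X \<inter> Z \<inter> D \<noteq> {}"
  shows "X \<inter> Y \<inter> Z = {}"
proof (rule ccontr)
  assume "X \<inter> Y \<inter> Z \<noteq> {}"
  have "X \<inter> Y \<inter> D = {}" "Y \<inter> Z \<inter> D = {}"
    using assms(5,6) inter_empty_if_orient_set_nonzero by metis+
  have "orient_set X Y D = orient_set Z Y D"
    by (rule orient_set_replace_first) (use assms \<open>X \<inter> Y \<inter> Z \<noteq> {}\<close> \<open>X \<inter> Y \<inter> D = {}\<close>
        \<open>Y \<inter> Z \<inter> D = {}\<close> in blast)+
  also have "\<dots> = - orient_set X Y D" using orient_set_swap [of Y Z D] assms(2-4,6) by simp
  finally show False using assms(5) by simp
qed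

end

locale pairwise_meeting_convex_sets_43 = pairwise_meeting_convex_sets +
  assumes four_three: "\<lbrakk>X \<in> F; Y \<in> F; Z \<in> F; W \<in> F; distinct [X, Y, Z, W]\<rbrakk> \<Longrightarrow>
    X \<inter> Y \<inter> Z \<noteq> {} \<or> X \<inter> Y \<inter> W \<noteq> {} \<or> X \<inter> Z \<inter> W \<noteq> {} \<or> Y \<inter> Z \<inter> W \<noteq> {}"
begin

lemma no_4_cycle_if_diagonal_meets:
  assumes mem: "A \<in> F" "B \<in> F" "C \<in> F" "E \<in> F" "D \<in> F" and "distinct [A, B, C, E, D]"
    and ABD: "orient_set A B D = 1" and BCD: "orient_set B C D = 1"
    and CED: "orient_set C E D = 1" and EAD: "orient_set E A D = 1"
    and ACD: "A \<inter> C \<inter> D \<noteq> {}"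
  shows False
proof -
  have empty: "A \<inter> B \<inter> D = {}" "B \<inter> C \<inter> D = {}" "C \<inter> E \<inter> D = {}" "E \<inter> A \<inter> D = {}"
    using ABD BCD CED EAD inter_empty_if_orient_set_nonzero by auto
  have ABC: "A \<inter> B \<inter> C = {}"
    using consecutive_arcs_inter_empty [of A B C D] mem ABD BCD ACD by simp
  have ACE: "A \<inter> C \<inter> E = {}"
    using consecutive_arcs_inter_empty [of C E A D] mem CED EAD ACD by (simp add: Int_ac)
  have distinct: "distinct [A, B, C, E]" "distinct [B, C, E, D]" "distinct [A, B, E, D]"
    using assms(6) by auto
  show False
  proof (cases "B \<inter> E \<inter> D = {}")
    case False
    have "E \<inter> A \<inter> B = {}"
      using consecutive_arcs_inter_empty [of E A B D] mem EAD ABD False by (simp add: Int_ac)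
    moreover have "B \<inter> C \<inter> E = {}"
      using consecutive_arcs_inter_empty [of B C E D] mem BCD CED False by simp
    ultimately show False using four_three [OF mem(1-4) distinct(1)] ABC ACE by blast
  next
    case True
    from four_three [OF mem(2-5) distinct(2)] empty True have BCE: "B \<inter> C \<inter> E \<noteq> {}" by blast
    from four_three [OF mem(1,2,4,5) distinct(3)] empty True have ABE: "A \<inter> B \<inter> E \<noteq> {}" by blast
    have "orient_set A B C = orient_set A B D"
      by (rule orient_set_replace_last) (use mem empty ACD ABC ABD BCD in simp_all)
    moreover have "orient_set C E A = orient_set C E D"
      by (rule orient_set_replace_last) (use mem empty ACD ACE CED EAD in \<open>simp_all add: Int_ac\<close>)
    moreover have "orient_set B C A = orient_set E C A"
      by (rule orient_set_replace_first) (use mem ABC ACE ABE BCE in \<open>simp_all add: Int_ac\<close>)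
    ultimately show False
      using orient_set_rotate [of A B C] orient_set_swap [of C E A] mem ABD CED by simp
  qed
qed

lemma no_4_cycle_if_diagonals_miss:
  assumes mem: "A \<in> F" "B \<in> F" "C \<in> F" "E \<in> F" "D \<in> F" and "distinct [A, B, C, E, D]"
    and ABD: "orient_set A B D = 1" and BCD: "orient_set B C D = 1"
    and CED: "orient_set C E D = 1" and EAD: "orient_set E A D = 1"
    and ACD: "A \<inter> C \<inter> D = {}" and BED: "B \<inter> E \<inter> D = {}"
  shows False
proof -
  have empty: "A \<inter> B \<inter> D = {}" "B \<inter> C \<inter> D = {}" "C \<inter> E \<inter> D = {}" "E \<inter> A \<inter> D = {}"
    using ABD BCD CED EAD inter_empty_if_orient_set_nonzero by auto
  have distinct: "distinct [A, B, C, D]" "distinct [A, C, E, D]" using assms(6) by auto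
  from four_three [OF mem(1-3,5) distinct(1)] empty ACD have ABC: "A \<inter> B \<inter> C \<noteq> {}" by blast
  from four_three [OF mem(1,3-5) distinct(2)] empty ACD have ACE: "A \<inter> C \<inter> E \<noteq> {}" by blast
  have DBC: "orient_set D B C = 1"
    using BCD orient_set_rotate [of B C D] orient_set_rotate [of C D B] mem by simp
  have ADB: "orient_set A D B = -1"
    using ABD orient_set_swap [of A D B] orient_set_rotate [of D A B] mem by simp
  have ADE: "orient_set A D E = 1"
    using EAD orient_set_rotate [of A D E] orient_set_rotate [of D E A] mem by simp
  have DCE: "orient_set D C E = 1"
    using CED orient_set_rotate [of C E D] orient_set_rotate [of E D C] mem by simp
  have "A \<inter> D \<inter> C = {}" using ACD by blast
  then consider "orient_set A D C = 1" | "orient_set A D C = -1"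
    using orient_set_cases mem by blast
  then show False
  proof cases
    case 1
    have "orient_set A D B = orient_set A D C"
      by (rule orient_set_replace_last) (use mem empty ABC ACD DBC 1 in \<open>simp_all add: Int_ac\<close>)
    with 1 ADB show False by simp
  next
    case 2
    have "orient_set A D C = orient_set A D E"
      by (rule orient_set_replace_last) (use mem empty ACE ACD ADE DCE in \<open>simp_all add: Int_ac\<close>)
    with 2 ADE show False by simp
  qed
qed

lemma no_4_cycle:
  assumes mem: "A \<in> F" "B \<in> F" "C \<in> F" "E \<in> F" "D \<in> F" and "distinct [A, B, C, E, D]"
    and orient: "orient_set A B D = 1" "orient_set B C D = 1" "orient_set C E D = 1" "orient_set E A D = 1"
  shows False
proof -
  have "distinct [B, C, E, A, D]" using \<open>distinct [A, B, C, E, D]\<close> by auto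
  consider "A \<inter> C \<inter> D \<noteq> {}" | "B \<inter> E \<inter> D \<noteq> {}" | "A \<inter> C \<inter> D = {}" "B \<inter> E \<inter> D = {}"
    by blast
  then show False
  proof cases
    case 1
    show False by (rule no_4_cycle_if_diagonal_meets [OF mem \<open>distinct [A, B, C, E, D]\<close> orient 1])
  next
    case 2
    show False
      by (rule no_4_cycle_if_diagonal_meets [OF mem(2-4,1,5) \<open>distinct [B, C, E, A, D]\<close>
          orient(2-4,1) 2])
  next
    case 3
    show False by (rule no_4_cycle_if_diagonals_miss [OF mem \<open>distinct [A, B, C, E, D]\<close> orient 3])
  qed
qed

end

theorem claim8:
  fixes F :: "(real^2) set set" and D :: "(real^2) set"
  assumes "finite F"
    and "\<forall>X\<in>F. compact X \<and> convex X"
    and "\<forall>X\<in>F. \<forall>Y\<in>F. X \<inter> Y \<noteq> {}"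
    and "\<forall>A\<in>F. \<forall>B\<in>F. \<forall>C\<in>F. \<forall>E\<in>F. distinct [A, B, C, E] \<longrightarrow>
           A \<inter> B \<inter> C \<noteq> {} \<or> A \<inter> B \<inter> E \<noteq> {} \<or> A \<inter> C \<inter> E \<noteq> {} \<or> B \<inter> C \<inter> E \<noteq> {}"
    and "D \<in> F"
  shows "\<not> (\<exists>A B C E. distinct [A, B, C, E] \<and>
           arc_G F D A B \<and> arc_G F D B C \<and> arc_G F D C E \<and> arc_G F D E A)"
proof
  assume "\<exists>A B C E. distinct [A, B, C, E] \<and>
           arc_G F D A B \<and> arc_G F D B C \<and> arc_G F D C E \<and> arc_G F D E A"
  then obtain A B C E where "distinct [A, B, C, E]"
    and arcs: "arc_G F D A B" "arc_G F D B C" "arc_G F D C E" "arc_G F D E A"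
    by blast
  interpret pairwise_meeting_convex_sets_43 F
    using assms(2-4) by unfold_locales blast+
  have mem: "A \<in> F" "B \<in> F" "C \<in> F" "E \<in> F" "D \<in> F"
    and "distinct [A, B, C, E, D]"
    and orient: "orient_set A B D = 1" "orient_set B C D = 1" "orient_set C E D = 1" "orient_set E A D = 1"
    using arcs \<open>distinct [A, B, C, E]\<close> assms(5) unfolding arc_G_def by auto
  then show False by (rule no_4_cycle)
qed

end
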